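(* Let the rows $X_1,\dots,X_p$ of $\mathbf X\in\mathbb{R}^{p\times L}$ be i.i.d. zero-mean sub-Gaussian random vectors with sub-Gaussian constant $\overline\sigma<\infty$. Let $\theta\in\mathbb{R}^L$ with $\|\theta\|_2\le B$, $\delta>0$ and $s\ge2$. For $p\ge p_0(B,\delta,s,\overline\sigma)$, $$\mathbb P\Big\{|N_\theta-\mathbb E[N_\theta]|\lesssim\sqrt{p^{1+\delta}\log p}\Big\}\ge1-4p^{1-s},$$ where $\lesssim$ hides an absolute constant.
   Context: $N_\theta=\sum_{j=1}^pe^{X_j^\top\theta}$. A random vector $Z\in\mathbb{R}^L$ is zero-mean sub-Gaussian with constant $\gamma$ if $\mathbb E Z=0$ and $\mathbb E[\exp(v^\top Z)]\le\exp(\|v\|_2^2\gamma^2/2)$ for all $v\in\mathbb{R}^L$. *)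

theory Defs
  imports "HOL-Probability.Probability"
begin

text \<open>Vectors in R^L are represented as functions nat => real, of which only the
coordinates i < L matter.\<close>

definition inner_L :: "nat \<Rightarrow> (nat \<Rightarrow> real) \<Rightarrow> (nat \<Rightarrow> real) \<Rightarrow> real" where
  "inner_L L v x = (\<Sum>i<L. v i * x i)"

definition norm_L :: "nat \<Rightarrow> (nat \<Rightarrow> real) \<Rightarrow> real" where
  "norm_L L v = sqrt (\<Sum>i<L. (v i)\<^sup>2)"

definition subgaussian_law :: "nat \<Rightarrow> (nat \<Rightarrow> real) measure \<Rightarrow> real \<Rightarrow> bool" where
  "subgaussian_law L \<mu> \<gamma> \<longleftrightarrow>
     prob_space \<mu> \<and> sets \<mu> = sets (PiM {..<L} (\<lambda>_. borel)) \<and>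
     (\<forall>i<L. integrable \<mu> (\<lambda>x. x i) \<and> (\<integral>x. x i \<partial>\<mu>) = 0) \<and>
     (\<forall>v. integrable \<mu> (\<lambda>x. exp (inner_L L v x)) \<and>
          (\<integral>x. exp (inner_L L v x) \<partial>\<mu>) \<le> exp ((norm_L L v)\<^sup>2 * \<gamma>\<^sup>2 / 2))"

definition N_theta :: "nat \<Rightarrow> nat \<Rightarrow> (nat \<Rightarrow> real) \<Rightarrow> (nat \<Rightarrow> nat \<Rightarrow> real) \<Rightarrow> real" where
  "N_theta p L \<theta> \<omega> = (\<Sum>j<p. exp (inner_L L (\<omega> j) \<theta>))"

end

theory Submission
  imports Defs
begin

(* Truncate every summand exp (X_j^T theta) at M = p powr (delta / 4). Sub-Gaussianity bounds
   all exponential moments, E exp (X^T theta) ^ k <= exp (k^2 B^2 sigma^2 / 2) =: K, so by Markov's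
   inequality and a union bound some summand exceeds M with probability at most p K / M ^ k,
   while truncation moves the mean of N_theta by at most p K / M ^ (k - 1). The truncated sum has
   independent summands in [0, M], and Hoeffding's inequality bounds its deviation by
   t = sqrt (p powr (1 + delta) * ln p) / 2 outside probability 2 exp (-2 t^2 / (p M^2)).
   Taking k of order s / delta makes every error term O (p powr (1 - s)). *)

lemma integrable_PiM_component:
  fixes g :: "'a \<Rightarrow> real"
  assumes "prob_space \<mu>" "j \<in> I" "integrable \<mu> g"
  shows "integrable (PiM I (\<lambda>_. \<mu>)) (\<lambda>\<omega>. g (\<omega> j))"
proof -
  have "distr (PiM I (\<lambda>_. \<mu>)) \<mu> (\<lambda>\<omega>. \<omega> j) = \<mu>"
    using assms by (intro distr_PiM_component) auto
  then show ?thesis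
    using integrable_distr_eq[OF measurable_component_singleton[OF \<open>j \<in> I\<close>, of "\<lambda>_. \<mu>"], of g]
      assms(3)
    by simp
qed

lemma integral_PiM_component:
  fixes g :: "'a \<Rightarrow> real"
  assumes "prob_space \<mu>" "j \<in> I" "g \<in> borel_measurable \<mu>"
  shows "(\<integral>\<omega>. g (\<omega> j) \<partial>PiM I (\<lambda>_. \<mu>)) = (\<integral>x. g x \<partial>\<mu>)"
proof -
  have "distr (PiM I (\<lambda>_. \<mu>)) \<mu> (\<lambda>\<omega>. \<omega> j) = \<mu>"
    using assms by (intro distr_PiM_component) auto
  then show ?thesis
    using integral_distr[OF measurable_component_singleton[OF \<open>j \<in> I\<close>] assms(3)] by simp
qed

lemma indep_vars_PiM_components:
  assumes "prob_space \<mu>" "I \<noteq> {}"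
  shows "prob_space.indep_vars (PiM I (\<lambda>_. \<mu>)) (\<lambda>_. \<mu>) (\<lambda>i \<omega>. \<omega> i) I"
proof -
  let ?P = "PiM I (\<lambda>_. \<mu>)"
  interpret P: prob_space ?P
    using assms by (intro prob_space_PiM) auto
  have "distr ?P ?P (\<lambda>\<omega>. \<lambda>i\<in>I. \<omega> i) = distr ?P ?P (\<lambda>\<omega>. \<omega>)"
    by (rule distr_cong) (auto simp: space_PiM)
  also have "\<dots> = (\<Pi>\<^sub>M i\<in>I. distr ?P \<mu> (\<lambda>\<omega>. \<omega> i))"
    by (subst distr_id, rule PiM_cong) (auto simp: distr_PiM_component[of I "\<lambda>_. \<mu>"] assms(1))
  finally show ?thesis
    by (subst P.indep_vars_iff_distr_eq_PiM')
      (auto simp: assms(2) intro: measurable_component_singleton)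
qed

lemma Hoeffding_PiM_abs_ge:
  fixes g :: "'a \<Rightarrow> real"
  assumes \<mu>: "prob_space \<mu>" and [measurable]: "g \<in> borel_measurable \<mu>"
    and bounded: "\<And>x. x \<in> space \<mu> \<Longrightarrow> g x \<in> {a..b}" and "a < b"
    and I: "finite I" "I \<noteq> {}" and "t \<ge> 0"
  defines "P \<equiv> PiM I (\<lambda>_. \<mu>)"
  shows "measure P {\<omega>\<in>space P. \<bar>(\<Sum>j\<in>I. g (\<omega> j)) - real (card I) * (\<integral>x. g x \<partial>\<mu>)\<bar> \<ge> t}
           \<le> 2 * exp (-2 * t\<^sup>2 / (real (card I) * (b - a)\<^sup>2))"
proof -
  interpret P: prob_space P
    unfolding P_def using \<mu> by (intro prob_space_PiM) auto
  have "P.indep_vars (\<lambda>_. borel) (\<lambda>j \<omega>. g (\<omega> j)) I"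
    using P.indep_vars_compose2[OF indep_vars_PiM_components[OF \<mu> I(2), folded P_def], of "\<lambda>_. g"]
    by simp
  moreover have "AE \<omega> in P. g (\<omega> j) \<in> {a..b}" if "j \<in> I" for j
    unfolding P_def using that by (intro AE_I2 bounded) (auto simp: space_PiM PiE_iff)
  ultimately interpret H: Hoeffding_ineq P I "\<lambda>j \<omega>. g (\<omega> j)" "\<lambda>_. a" "\<lambda>_. b"
      "\<Sum>j\<in>I. P.expectation (\<lambda>\<omega>. g (\<omega> j))"
    by unfold_locales (auto simp: I)
  have "(\<Sum>j\<in>I. P.expectation (\<lambda>\<omega>. g (\<omega> j))) = real (card I) * (\<integral>x. g x \<partial>\<mu>)"
    unfolding P_def using \<mu> by (simp add: integral_PiM_component)
  moreover have "(\<Sum>j\<in>I. (b - a)\<^sup>2) = real (card I) * (b - a)\<^sup>2"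
    by simp
  moreover have "(\<Sum>j\<in>I. (b - a)\<^sup>2) > 0"
    using I \<open>a < b\<close> by (intro sum_pos) auto
  ultimately show ?thesis
    using H.Hoeffding_ineq_abs_ge[OF \<open>t \<ge> 0\<close>] by simp
qed

lemma integral_PiM_sum_components:
  fixes f :: "'a \<Rightarrow> real"
  assumes "prob_space \<mu>" "integrable \<mu> f" "finite I"
  shows "(\<integral>\<omega>. (\<Sum>j\<in>I. f (\<omega> j)) \<partial>PiM I (\<lambda>_. \<mu>)) = real (card I) * (\<integral>x. f x \<partial>\<mu>)"
  using assms by (simp add: integrable_PiM_component integral_PiM_component)

lemma diff_min_le_power_div:
  fixes y M :: real
  assumes "0 \<le> y" "0 < M" "1 \<le> k"
  shows "y - min y M \<le> y ^ k / M ^ (k - 1)"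
proof (cases "y \<le> M")
  case True
  then show ?thesis using assms by simp
next
  case False
  have "1 \<le> (y / M) ^ (k - 1)"
    using False assms by (intro one_le_power) auto
  then have "y * 1 \<le> y * (y / M) ^ (k - 1)"
    using assms by (intro mult_left_mono) auto
  also have "\<dots> = y ^ k / M ^ (k - 1)"
    using assms by (cases k) (auto simp: power_divide)
  finally show ?thesis using False assms(2) by simp
qed

lemma abs_integral_diff_min_le:
  fixes f :: "'a \<Rightarrow> real"
  assumes f: "integrable \<mu> f" and fk: "integrable \<mu> (\<lambda>x. f x ^ k)"
    and nonneg: "\<And>x. x \<in> space \<mu> \<Longrightarrow> 0 \<le> f x" and M: "0 < M" and k: "1 \<le> k"
  shows "\<bar>(\<integral>x. f x \<partial>\<mu>) - (\<integral>x. min (f x) M \<partial>\<mu>)\<bar> \<le> (\<integral>x. f x ^ k \<partial>\<mu>) / M ^ (k - 1)"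
proof -
  have [measurable]: "f \<in> borel_measurable \<mu>"
    using f by auto
  have min_int: "integrable \<mu> (\<lambda>x. min (f x) M)"
    using f by (rule Bochner_Integration.integrable_bound)
      (use M nonneg in \<open>auto intro!: AE_I2\<close>)
  have "0 \<le> (\<integral>x. f x - min (f x) M \<partial>\<mu>)"
    by (intro integral_nonneg_AE AE_I2) auto
  moreover have "(\<integral>x. f x - min (f x) M \<partial>\<mu>) \<le> (\<integral>x. f x ^ k / M ^ (k - 1) \<partial>\<mu>)"
    using f fk min_int M k nonneg
    by (intro integral_mono diff_min_le_power_div) auto
  ultimately show ?thesis
    using f min_int by simp
qed

lemma prob_PiM_exists_component_ge:
  fixes f :: "'a \<Rightarrow> real"
  assumes \<mu>: "prob_space \<mu>" and f [measurable]: "f \<in> borel_measurable \<mu>"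
    and fk: "integrable \<mu> (\<lambda>x. f x ^ k)" and nonneg: "\<And>x. x \<in> space \<mu> \<Longrightarrow> 0 \<le> f x"
    and M: "0 < M" and I: "finite I"
  defines "P \<equiv> PiM I (\<lambda>_. \<mu>)"
  shows "measure P {\<omega>\<in>space P. \<exists>j\<in>I. M \<le> f (\<omega> j)}
           \<le> real (card I) * (\<integral>x. f x ^ k \<partial>\<mu>) / M ^ k"
proof -
  interpret P: prob_space P
    unfolding P_def using \<mu> by (intro prob_space_PiM) auto
  have component [measurable]: "(\<lambda>\<omega>. \<omega> j) \<in> P \<rightarrow>\<^sub>M \<mu>" if "j \<in> I" for j
    unfolding P_def using that by (rule measurable_component_singleton)
  have Markov: "P.prob {\<omega>\<in>space P. M ^ k \<le> f (\<omega> j) ^ k} \<le> (\<integral>x. f x ^ k \<partial>\<mu>) / M ^ k"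
    if j: "j \<in> I" for j
  proof -
    have "P.prob {\<omega>\<in>space P. M ^ k \<le> f (\<omega> j) ^ k} \<le> (\<integral>\<omega>. f (\<omega> j) ^ k \<partial>P) / M ^ k"
      using \<mu> j fk M nonneg measurable_space[OF component[OF j]] unfolding P_def
      by (intro integral_Markov_inequality_measure[where A = "space (PiM I (\<lambda>_. \<mu>))"] AE_I2 integrable_PiM_component)
        auto
    also have "(\<integral>\<omega>. f (\<omega> j) ^ k \<partial>P) = (\<integral>x. f x ^ k \<partial>\<mu>)"
      unfolding P_def using \<mu> j by (intro integral_PiM_component) auto
    finally show ?thesis .
  qed
  have "M ^ k \<le> f (\<omega> j) ^ k" if "j \<in> I" "M \<le> f (\<omega> j)" for \<omega> j
    using that M by (intro power_mono) auto
  then have "{\<omega>\<in>space P. \<exists>j\<in>I. M \<le> f (\<omega> j)}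
      \<subseteq> (\<Union>j\<in>I. {\<omega>\<in>space P. M ^ k \<le> f (\<omega> j) ^ k})"
    by blast
  then have "P.prob {\<omega>\<in>space P. \<exists>j\<in>I. M \<le> f (\<omega> j)}
      \<le> P.prob (\<Union>j\<in>I. {\<omega>\<in>space P. M ^ k \<le> f (\<omega> j) ^ k})"
    using I by (intro P.finite_measure_mono) auto
  also have "\<dots> \<le> (\<Sum>j\<in>I. P.prob {\<omega>\<in>space P. M ^ k \<le> f (\<omega> j) ^ k})"
    using I by (intro P.finite_measure_subadditive_finite) auto
  also have "\<dots> \<le> (\<Sum>j\<in>I. (\<integral>x. f x ^ k \<partial>\<mu>) / M ^ k)"
    by (intro sum_mono Markov)
  finally show ?thesis by simp
qed

lemma truncated_concentration_PiM_sum: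
  fixes f :: "'a \<Rightarrow> real"
  assumes \<mu>: "prob_space \<mu>" and f [measurable]: "f \<in> borel_measurable \<mu>"
    and f_int: "integrable \<mu> f" and fk: "integrable \<mu> (\<lambda>x. f x ^ k)"
    and nonneg: "\<And>x. x \<in> space \<mu> \<Longrightarrow> 0 \<le> f x"
    and M: "0 < M" and k: "1 \<le> k" and p: "0 < p" and t: "0 \<le> t"
    and R: "t + real p * (\<integral>x. f x ^ k \<partial>\<mu>) / M ^ (k - 1) \<le> R"
  defines "P \<equiv> PiM {..<p} (\<lambda>_. \<mu>)"
  shows "1 - real p * (\<integral>x. f x ^ k \<partial>\<mu>) / M ^ k - 2 * exp (-2 * t\<^sup>2 / (real p * M\<^sup>2))
           \<le> measure P {\<omega>\<in>space P. \<bar>(\<Sum>j<p. f (\<omega> j)) - real p * (\<integral>x. f x \<partial>\<mu>)\<bar> \<le> R}"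
proof -
  interpret P: prob_space P
    unfolding P_def using \<mu> by (intro prob_space_PiM) auto
  have [measurable]: "(\<lambda>\<omega>. \<omega> j) \<in> P \<rightarrow>\<^sub>M \<mu>" if "j < p" for j
    unfolding P_def using that by (intro measurable_component_singleton) auto
  define Ek where "Ek = (\<integral>x. f x ^ k \<partial>\<mu>)"
  define Emin where "Emin = (\<integral>x. min (f x) M \<partial>\<mu>)"
  define good where
    "good = {\<omega>\<in>space P. \<bar>(\<Sum>j<p. f (\<omega> j)) - real p * (\<integral>x. f x \<partial>\<mu>)\<bar> \<le> R}"
  define large where "large = {\<omega>\<in>space P. \<exists>j\<in>{..<p}. M \<le> f (\<omega> j)}"
  define deviating where
    "deviating = {\<omega>\<in>space P. t \<le> \<bar>(\<Sum>j<p. min (f (\<omega> j)) M) - real p * Emin\<bar>}"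
  have large_prob: "P.prob large \<le> real p * Ek / M ^ k"
    using prob_PiM_exists_component_ge[OF \<mu> f fk nonneg M, of "{..<p}"]
    unfolding large_def Ek_def P_def by simp
  have deviating_prob: "P.prob deviating \<le> 2 * exp (-2 * t\<^sup>2 / (real p * M\<^sup>2))"
    using Hoeffding_PiM_abs_ge[OF \<mu>, of "\<lambda>x. min (f x) M" 0 M "{..<p}"] nonneg M p t
    unfolding deviating_def Emin_def P_def by (simp add: lessThan_empty_iff)
  have bias: "\<bar>real p * (\<integral>x. f x \<partial>\<mu>) - real p * Emin\<bar> \<le> real p * (Ek / M ^ (k - 1))"
    using mult_left_mono[OF abs_integral_diff_min_le[OF f_int fk nonneg M k], of "real p"]
    unfolding Emin_def Ek_def by (simp add: abs_mult flip: right_diff_distrib)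
  have "space P - good \<subseteq> large \<union> deviating"
  proof (intro subsetI, rule ccontr)
    fix \<omega> assume \<omega>: "\<omega> \<in> space P - good" and "\<omega> \<notin> large \<union> deviating"
    then have small: "\<And>j. j < p \<Longrightarrow> f (\<omega> j) < M"
      and close: "\<bar>(\<Sum>j<p. min (f (\<omega> j)) M) - real p * Emin\<bar> < t"
      unfolding large_def deviating_def by (auto simp: not_le)
    have "(\<Sum>j<p. f (\<omega> j)) = (\<Sum>j<p. min (f (\<omega> j)) M)"
      using small by (intro sum.cong) (auto intro: min_absorb1 less_imp_le)
    then have "\<bar>(\<Sum>j<p. f (\<omega> j)) - real p * (\<integral>x. f x \<partial>\<mu>)\<bar>
        \<le> \<bar>(\<Sum>j<p. min (f (\<omega> j)) M) - real p * Emin\<bar>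
          + \<bar>real p * (\<integral>x. f x \<partial>\<mu>) - real p * Emin\<bar>"
      by arith
    also have "\<dots> < t + real p * (Ek / M ^ (k - 1))"
      using close bias by linarith
    finally show False
      using \<omega> R unfolding good_def Ek_def by auto
  qed
  then have "P.prob (space P - good) \<le> P.prob (large \<union> deviating)"
    unfolding large_def deviating_def by (intro P.finite_measure_mono) auto
  also have "\<dots> \<le> P.prob large + P.prob deviating"
    unfolding large_def deviating_def by (intro measure_Un_le) auto
  finally have "P.prob (space P - good) \<le> real p * Ek / M ^ k + 2 * exp (-2 * t\<^sup>2 / (real p * M\<^sup>2))"
    using large_prob deviating_prob by simp
  moreover have "good \<in> P.events"
    unfolding good_def by measurable
  ultimately show ?thesis
    using P.prob_compl unfolding good_def Ek_def by fastforce
qed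

lemma inner_L_commute: "inner_L L v x = inner_L L x v"
  unfolding inner_L_def by (simp add: mult.commute)

lemma inner_L_scale_left: "inner_L L (\<lambda>i. c * v i) x = c * inner_L L v x"
  unfolding inner_L_def by (simp add: sum_distrib_left mult.assoc)

lemma norm_L_nonneg: "0 \<le> norm_L L v"
  unfolding norm_L_def by (simp add: sum_nonneg)

lemma norm_L_scale: "norm_L L (\<lambda>i. c * v i) = \<bar>c\<bar> * norm_L L v"
  unfolding norm_L_def
  by (simp add: power_mult_distrib real_sqrt_mult flip: sum_distrib_left)

lemma subgaussian_law_prob_space: "subgaussian_law L \<mu> \<sigma> \<Longrightarrow> prob_space \<mu>"
  unfolding subgaussian_law_def by simp

lemma subgaussian_law_measurable_exp_inner_L:
  assumes "subgaussian_law L \<mu> \<sigma>"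
  shows "(\<lambda>x. exp (inner_L L v x)) \<in> borel_measurable \<mu>"
proof -
  have "(\<lambda>x. exp (inner_L L v x)) \<in> borel_measurable (PiM {..<L} (\<lambda>_. borel :: real measure))"
    unfolding inner_L_def by measurable
  moreover have "sets \<mu> = sets (PiM {..<L} (\<lambda>_. borel))"
    using assms unfolding subgaussian_law_def by simp
  ultimately show ?thesis
    by (simp cong: measurable_cong_sets)
qed

lemma subgaussian_law_exp_inner_power:
  assumes sg: "subgaussian_law L \<mu> \<sigma>" and \<theta>: "norm_L L \<theta> \<le> B"
  shows "integrable \<mu> (\<lambda>x. exp (inner_L L \<theta> x) ^ k)"
    and "(\<integral>x. exp (inner_L L \<theta> x) ^ k \<partial>\<mu>) \<le> exp (real k ^ 2 * B ^ 2 * \<sigma> ^ 2 / 2)"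
proof -
  define v where "v = (\<lambda>i. real k * \<theta> i)"
  have power: "exp (inner_L L \<theta> x) ^ k = exp (inner_L L v x)" for x
    unfolding v_def inner_L_scale_left by (simp flip: exp_of_nat_mult)
  have "(norm_L L v)\<^sup>2 = (real k)\<^sup>2 * (norm_L L \<theta>)\<^sup>2"
    unfolding v_def norm_L_scale by (simp add: power_mult_distrib)
  also have "\<dots> \<le> (real k)\<^sup>2 * B\<^sup>2"
    using \<theta> norm_L_nonneg by (intro mult_left_mono power_mono) auto
  finally have "(norm_L L v)\<^sup>2 * \<sigma>\<^sup>2 / 2 \<le> real k ^ 2 * B ^ 2 * \<sigma> ^ 2 / 2"
    by (intro divide_right_mono mult_right_mono) auto
  moreover have "integrable \<mu> (\<lambda>x. exp (inner_L L v x))"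
    and "(\<integral>x. exp (inner_L L v x) \<partial>\<mu>) \<le> exp ((norm_L L v)\<^sup>2 * \<sigma>\<^sup>2 / 2)"
    using sg unfolding subgaussian_law_def by auto
  ultimately show "integrable \<mu> (\<lambda>x. exp (inner_L L \<theta> x) ^ k)"
    and "(\<integral>x. exp (inner_L L \<theta> x) ^ k \<partial>\<mu>) \<le> exp (real k ^ 2 * B ^ 2 * \<sigma> ^ 2 / 2)"
    unfolding power by (auto intro: order_trans)
qed

lemma N_theta_deviation_bound:
  fixes B \<sigma> M t R :: real
  assumes sg: "subgaussian_law L \<mu> \<sigma>" and \<theta>: "norm_L L \<theta> \<le> B"
    and M: "0 < M" and k: "1 \<le> k" and p: "0 < p" and t: "0 \<le> t"
  defines "K \<equiv> exp (real k ^ 2 * B ^ 2 * \<sigma> ^ 2 / 2)" and "P \<equiv> PiM {..<p} (\<lambda>_. \<mu>)"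
  assumes R: "t + real p * K / M ^ (k - 1) \<le> R"
  shows "1 - real p * K / M ^ k - 2 * exp (-2 * t\<^sup>2 / (real p * M\<^sup>2))
           \<le> measure P {\<omega>\<in>space P. \<bar>N_theta p L \<theta> \<omega> - (\<integral>\<omega>. N_theta p L \<theta> \<omega> \<partial>P)\<bar> \<le> R}"
proof -
  define f where "f = (\<lambda>x. exp (inner_L L \<theta> x))"
  define Ek where "Ek = (\<integral>x. f x ^ k \<partial>\<mu>)"
  have \<mu>: "prob_space \<mu>"
    using sg by (rule subgaussian_law_prob_space)
  have f_int: "integrable \<mu> f"
    using subgaussian_law_exp_inner_power(1)[OF sg \<theta>, of 1] unfolding f_def by simp
  have fk: "integrable \<mu> (\<lambda>x. f x ^ k)" and Ek: "Ek \<le> K"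
    using subgaussian_law_exp_inner_power[OF sg \<theta>] unfolding f_def Ek_def K_def by auto
  have N: "N_theta p L \<theta> = (\<lambda>\<omega>. \<Sum>j<p. f (\<omega> j))"
    unfolding N_theta_def f_def by (simp add: inner_L_commute)
  have EN: "(\<integral>\<omega>. N_theta p L \<theta> \<omega> \<partial>P) = real p * (\<integral>x. f x \<partial>\<mu>)"
    unfolding N P_def using integral_PiM_sum_components[OF \<mu> f_int, of "{..<p}"] by simp
  have Ek_K: "real p * Ek / M ^ j \<le> real p * K / M ^ j" for j
    using Ek M by (intro divide_right_mono mult_left_mono) auto
  have "1 - real p * K / M ^ k - 2 * exp (-2 * t\<^sup>2 / (real p * M\<^sup>2))
      \<le> 1 - real p * Ek / M ^ k - 2 * exp (-2 * t\<^sup>2 / (real p * M\<^sup>2))"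
    and "t + real p * Ek / M ^ (k - 1) \<le> R"
    using Ek_K[of k] Ek_K[of "k - 1"] R by linarith+
  moreover have "f \<in> borel_measurable \<mu>"
    unfolding f_def using sg by (rule subgaussian_law_measurable_exp_inner_L)
  ultimately have "1 - real p * K / M ^ k - 2 * exp (-2 * t\<^sup>2 / (real p * M\<^sup>2))
      \<le> measure P {\<omega>\<in>space P. \<bar>(\<Sum>j<p. f (\<omega> j)) - real p * (\<integral>x. f x \<partial>\<mu>)\<bar> \<le> R}"
    using truncated_concentration_PiM_sum[OF \<mu> _ f_int fk _ M k p t, of R]
    unfolding P_def Ek_def f_def by fastforce
  then show ?thesis
    unfolding EN by (simp add: N)
qed

lemma truncation_tail_terms_le:
  fixes x s K M :: real
  assumes x: "1 \<le> x" and s: "0 \<le> s" and K: "1 \<le> K" "K \<le> x" and M: "1 \<le> M"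
    and Mk: "x powr (s + 1) \<le> M ^ (k - 1)"
  shows "x * K / M ^ (k - 1) \<le> K" and "x * K / M ^ k \<le> x powr (1 - s)"
proof -
  have decay: "x * K / M ^ j \<le> K * x powr (- s)" if "x powr (s + 1) \<le> M ^ j" for j
  proof -
    have "0 < x powr (s + 1)"
      using x by simp
    moreover have "0 \<le> x * K" "0 < M ^ j"
      using x K M by simp_all
    ultimately have "x * K / M ^ j \<le> x * K / x powr (s + 1)"
      using that by (intro divide_left_mono mult_pos_pos) auto
    also have "\<dots> = K * x powr (- s)"
      using x by (simp add: powr_add powr_minus field_simps)
    finally show ?thesis .
  qed
  have "x powr (- s) \<le> 1"
    using x s by (simp add: powr_minus_divide ge_one_powr_ge_zero)
  then show "x * K / M ^ (k - 1) \<le> K"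
    using decay[OF Mk] K by (smt (verit) mult_left_le)
  have "M ^ (k - 1) \<le> M ^ k"
    using M by (intro power_increasing) auto
  then have "x * K / M ^ k \<le> K * x powr (- s)"
    using Mk by (intro decay) auto
  also have "\<dots> \<le> x * x powr (- s)"
    using K by (intro mult_right_mono) auto
  also have "\<dots> = x powr (1 - s)"
    using x by (simp add: powr_diff powr_minus divide_inverse)
  finally show "x * K / M ^ k \<le> x powr (1 - s)" .
qed

lemma Hoeffding_exponent_le:
  fixes x \<delta> s :: real
  assumes x: "1 \<le> x" and \<delta>: "0 < \<delta>" and s: "0 < s" and xs: "(2 * s) powr (2 / \<delta>) \<le> x"
  shows "exp (-2 * (sqrt (x powr (1 + \<delta>) * ln x) / 2)\<^sup>2 / (x * (x powr (\<delta> / 4))\<^sup>2))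
           \<le> x powr (1 - s)"
proof -
  have "x powr (1 + \<delta>) = x powr (1 + \<delta> / 2) * x powr (\<delta> / 2)"
    by (simp add: add.commute flip: powr_add)
  then have numerator: "(sqrt (x powr (1 + \<delta>) * ln x) / 2)\<^sup>2 = x powr (1 + \<delta> / 2) * x powr (\<delta> / 2) * ln x / 4"
    using x by (simp add: power_divide)
  have denominator: "x * (x powr (\<delta> / 4))\<^sup>2 = x powr (1 + \<delta> / 2)"
    using x by (simp add: powr_power powr_add)
  have exponent: "-2 * (sqrt (x powr (1 + \<delta>) * ln x) / 2)\<^sup>2 / (x * (x powr (\<delta> / 4))\<^sup>2)
      = - (x powr (\<delta> / 2) / 2) * ln x"
    unfolding numerator denominator using x by (simp add: field_simps)
  have "2 * s = ((2 * s) powr (2 / \<delta>)) powr (\<delta> / 2)"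
    using \<delta> s by (simp add: powr_powr)
  also have "\<dots> \<le> x powr (\<delta> / 2)"
    using xs \<delta> s by (intro powr_mono2) auto
  finally have "- (x powr (\<delta> / 2) / 2) * ln x \<le> (1 - s) * ln x"
    using x by (intro mult_right_mono) auto
  then show ?thesis
    unfolding exponent using x by (simp add: powr_def)
qed

lemma le_half_sqrt_powr_ln:
  fixes x \<delta> K :: real
  assumes x: "3 \<le> x" and \<delta>: "0 \<le> \<delta>" and xK: "4 * K\<^sup>2 \<le> x"
  shows "K \<le> sqrt (x powr (1 + \<delta>) * ln x) / 2"
proof -
  have "1 \<le> ln x"
    using exp_le x by (subst ln_ge_iff) auto
  moreover have "x \<le> x powr (1 + \<delta>)"
    using powr_mono[of 1 "1 + \<delta>" x] x \<delta> by simp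
  ultimately have "x * 1 \<le> x powr (1 + \<delta>) * ln x"
    using x by (intro mult_mono) auto
  then have "sqrt x \<le> sqrt (x powr (1 + \<delta>) * ln x)"
    by simp
  moreover have "2 * K \<le> sqrt x"
    using xK by (intro real_le_rsqrt) (simp add: power_mult_distrib)
  ultimately show ?thesis
    by linarith
qed

lemma N_theta_concentration_large_p:
  fixes B \<delta> s \<sigma> :: real
  assumes \<delta>: "0 < \<delta>" and s: "2 \<le> s"
  shows "\<exists>p0::nat. \<forall>p\<ge>p0. \<forall>L \<mu> (\<theta>::nat \<Rightarrow> real).
    subgaussian_law L \<mu> \<sigma> \<and> norm_L L \<theta> \<le> B \<longrightarrow>
      measure (PiM {..<p} (\<lambda>_. \<mu>))
        {\<omega>\<in>space (PiM {..<p} (\<lambda>_. \<mu>)).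
           \<bar>N_theta p L \<theta> \<omega> - (\<integral>\<omega>. N_theta p L \<theta> \<omega> \<partial>PiM {..<p} (\<lambda>_. \<mu>))\<bar>
             \<le> sqrt (real p powr (1 + \<delta>) * ln (real p))}
      \<ge> 1 - 4 * real p powr (1 - s)"
proof -
  \<comment> \<open>\<open>k\<close> is chosen so that \<open>M ^ (k - 1) \<ge> p powr (s + 1)\<close> for the truncation level \<open>M = p powr (\<delta> / 4)\<close>.\<close>
  define k :: nat where "k = nat \<lceil>4 * (s + 1) / \<delta>\<rceil> + 1"
  define K where "K = exp (real k ^ 2 * B ^ 2 * \<sigma> ^ 2 / 2)"
  have k: "1 \<le> k" and K: "1 \<le> K"
    unfolding k_def K_def by auto
  have "4 * (s + 1) / \<delta> \<le> real (k - 1)"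
    unfolding k_def by linarith
  then have k_large: "s + 1 \<le> real (k - 1) * (\<delta> / 4)"
    using \<delta> by (simp add: field_simps)
  show ?thesis
  proof (intro exI[of _ "nat \<lceil>max 3 (max (4 * K\<^sup>2) ((2 * s) powr (2 / \<delta>)))\<rceil>"] allI impI)
    fix p L \<mu> and \<theta> :: "nat \<Rightarrow> real"
    assume "nat \<lceil>max 3 (max (4 * K\<^sup>2) ((2 * s) powr (2 / \<delta>)))\<rceil> \<le> p"
    then have p3: "3 \<le> real p" and pK: "4 * K\<^sup>2 \<le> real p" and ps: "(2 * s) powr (2 / \<delta>) \<le> real p"
      by linarith+
    assume "subgaussian_law L \<mu> \<sigma> \<and> norm_L L \<theta> \<le> B"
    then have sg: "subgaussian_law L \<mu> \<sigma>" and \<theta>: "norm_L L \<theta> \<le> B"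
      by auto
    define M where "M = real p powr (\<delta> / 4)"
    define t where "t = sqrt (real p powr (1 + \<delta>) * ln (real p)) / 2"
    have M1: "1 \<le> M"
      unfolding M_def using p3 \<delta> by (intro ge_one_powr_ge_zero) auto
    have "M ^ (k - 1) = real p powr (real (k - 1) * (\<delta> / 4))"
      unfolding M_def using p3 by (simp add: powr_power)
    then have Mk: "real p powr (s + 1) \<le> M ^ (k - 1)"
      using powr_mono[OF k_large, of "real p"] p3 by simp
    have "K * 1 \<le> K * K"
      using K by (intro mult_left_mono) auto
    then have "K \<le> real p"
      using pK by (simp add: power2_eq_square)
    then have tail: "real p * K / M ^ (k - 1) \<le> K" "real p * K / M ^ k \<le> real p powr (1 - s)"
      using truncation_tail_terms_le[of "real p" s K M k] p3 s K M1 Mk by auto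
    have Hoeffding_term: "exp (-2 * t\<^sup>2 / (real p * M\<^sup>2)) \<le> real p powr (1 - s)"
      unfolding t_def M_def using Hoeffding_exponent_le[OF _ \<delta> _ ps] p3 s by simp
    have "K \<le> t"
      unfolding t_def using le_half_sqrt_powr_ln[OF p3 _ pK] \<delta> by simp
    then have "t + real p * K / M ^ (k - 1) \<le> sqrt (real p powr (1 + \<delta>) * ln (real p))"
      using tail(1) unfolding t_def by linarith
    moreover have "0 < M" "0 < p" "0 \<le> t"
      unfolding t_def using M1 p3 by simp_all
    ultimately have "1 - real p * K / M ^ k - 2 * exp (-2 * t\<^sup>2 / (real p * M\<^sup>2))
      \<le> measure (PiM {..<p} (\<lambda>_. \<mu>))
         {\<omega>\<in>space (PiM {..<p} (\<lambda>_. \<mu>)).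
            \<bar>N_theta p L \<theta> \<omega> - (\<integral>\<omega>. N_theta p L \<theta> \<omega> \<partial>PiM {..<p} (\<lambda>_. \<mu>))\<bar>
              \<le> sqrt (real p powr (1 + \<delta>) * ln (real p))}"
      using N_theta_deviation_bound[OF sg \<theta> _ k] unfolding K_def by blast
    then show "measure (PiM {..<p} (\<lambda>_. \<mu>))
         {\<omega>\<in>space (PiM {..<p} (\<lambda>_. \<mu>)).
            \<bar>N_theta p L \<theta> \<omega> - (\<integral>\<omega>. N_theta p L \<theta> \<omega> \<partial>PiM {..<p} (\<lambda>_. \<mu>))\<bar>
              \<le> sqrt (real p powr (1 + \<delta>) * ln (real p))}
      \<ge> 1 - 4 * real p powr (1 - s)"
      using tail(2) Hoeffding_term powr_ge_zero[of "real p" "1 - s"] by linarith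
  qed
qed

theorem lemma14:
  shows "\<exists>C>0. \<forall>(B::real) (\<delta>::real) (s::real) (\<sigma>::real). \<delta> > 0 \<and> s \<ge> 2 \<longrightarrow>
    (\<exists>p0::nat. \<forall>p\<ge>p0. \<forall>(L::nat) (\<mu>::(nat \<Rightarrow> real) measure) (\<theta>::nat \<Rightarrow> real).
       subgaussian_law L \<mu> \<sigma> \<and> norm_L L \<theta> \<le> B \<longrightarrow>
       (let P = PiM {..<p} (\<lambda>_. \<mu>);
            EN = (\<integral>\<omega>. N_theta p L \<theta> \<omega> \<partial>P)
        in measure P {\<omega> \<in> space P.
              \<bar>N_theta p L \<theta> \<omega> - EN\<bar> \<le> C * sqrt (real p powr (1 + \<delta>) * ln (real p))}
           \<ge> 1 - 4 * real p powr (1 - s)))"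
  by (intro exI[of _ "1::real"]) (simp add: Let_def N_theta_concentration_large_p)

end
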